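(* Let $f:M^n\to\mathbb{R}^m$, $n\ge3$, be an umbilic-free isometric immersion with flat normal bundle, with distinct Moebius principal normal vector fields $\bar\eta_1,\dots,\bar\eta_k$, and suppose the Blaschke tensor satisfies $\psi(E_{\eta_i},E_{\eta_j})=0$ for $i\neq j$ and $\psi|_{E_{\eta_i}\times E_{\eta_i}}=\theta_i\langle\cdot,\cdot\rangle^*$ for functions $\theta_1,\dots,\theta_k$. Then $f$ has semi-parallel Moebius second fundamental form if and only if $$\langle\bar\eta_i,\bar\eta_j\rangle+\theta_i+\theta_j=0\quad\text{for all }1\le i\ne j\le k,$$ equivalently, if and only if $\langle R^*(X,Y)Y,X\rangle^*=0$ for all $X\in E_{\eta_i}$, $Y\in E_{\eta_j}$, $i\ne j$.
   Context: Let $f:M^n\to\mathbb{R}^{m}$ be an isometric immersion of a Riemannian manifold $(M^n,\langle\cdot,\cdot\rangle)$ with second fundamental form $\alpha$, mean curvature vector $\mathcal H=\frac1n\operatorname{tr}\alpha$ and normal connection $\nabla^\perp$ with curvature $R^\perp$. Put $\rho^2=\frac{n}{n-1}(\|\alpha\|^2-n\|\mathcal H\|^2)$; $f$ is umbilic-free if $\rho>0$ everywhere. The Moebius metric is $\langle\cdot,\cdot\rangle^*=\rho^2\langle\cdot,\cdot\rangle$, with Levi-Civita connection $\nabla^*$ and curvature $R^*$; the Moebius second fundamental form is $\beta=\rho(\alpha-\mathcal H\langle\cdot,\cdot\rangle)$. The Blaschke tensor is $\psi(X,Y)=\frac1\rho\langle\beta(X,Y),\mathcal H\rangle+\frac{1}{2\rho^2}(\|\operatorname{grad}^*\rho\|_*^2+\|\mathcal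 H\|^2)\langle X,Y\rangle^*-\frac1\rho\operatorname{Hess}^*\rho(X,Y)$, with gradient, norm and Hessian taken with respect to $\langle\cdot,\cdot\rangle^*$. $f$ has semi-parallel Moebius second fundamental form if $R^\perp(X,Y)\beta(Z,W)-\beta(R^*(X,Y)Z,W)-\beta(Z,R^*(X,Y)W)=0$ for all tangent $X,Y,Z,W$. $f$ has flat normal bundle if $R^\perp=0$; then there are pairwise distinct normal vector fields $\eta_1,\dots,\eta_k$ (principal normal vector fields) and an orthogonal decomposition $TM=E_{\eta_1}\oplus\cdots\oplus E_{\eta_k}$ with $\alpha(X,Y)=\langle X,Y\rangle\eta_i$ for $X\in E_{\eta_i}$, $Y\in TM$. The Moebius principal normal vector fields are $\bar\eta_i=\rho^{-1}(\eta_i-\mathcal H)$, so $\beta(X,Y)=\langle X,Y\rangle^*\bar\eta_i$ for $X\in E_{\eta_i}$. The conformal Gauss equation reads $\langle R^*(X,Y)Z,W\rangle^*=\langle\beta(X,W),\beta(Y,Z)\rangle-\langle\beta(X,Z),\beta(Y,W)\rangle+\psi(X,W)\langle Y,Z\rangle^*+\psi(Y,Z)\langle X,W\rangle^*-\psi(X,Z)\langle Y,W\rangle^*-\psi(Y,W)\langle X,Z\rangle^*$. *)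

theory Defs
  imports "HOL-Analysis.Analysis"
begin

text \<open>At a point p of M the tangent space, equipped with the
Moebius metric, is identified (via a Moebius-orthonormal frame) with a Euclidean
space of type 'v, and the normal space (with the Euclidean metric of R^m) with a
Euclidean space of type 'w.
R is the curvature R^* of the Moebius metric, Rperp the normal curvature,
beta the Moebius second fundamental form.\<close>

definition semi_parallel_at ::
  "('v::real_inner \<Rightarrow> 'v \<Rightarrow> 'v \<Rightarrow> 'v) \<Rightarrow> ('v \<Rightarrow> 'v \<Rightarrow> 'w::real_inner \<Rightarrow> 'w)
     \<Rightarrow> ('v \<Rightarrow> 'v \<Rightarrow> 'w) \<Rightarrow> bool" where
  "semi_parallel_at R Rperp \<beta> \<longleftrightarrow>
     (\<forall>X Y Z W. Rperp X Y (\<beta> Z W) - \<beta> (R X Y Z) W - \<beta> Z (R X Y W) = 0)"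

end

theory Submission
  imports Defs
begin

text \<open>In a Moebius-orthonormal frame adapted to the decomposition into the eigenspaces \<open>E\<^sub>i\<close>,
the conformal Gauss equation makes \<open>R\<^sup>*\<close> a curvature operator of constant curvature
\<open>c\<^sub>i\<^sub>j = \<langle>\<eta>\<^sub>i, \<eta>\<^sub>j\<rangle> + \<theta>\<^sub>i + \<theta>\<^sub>j\<close> on each pair \<open>E\<^sub>i \<times> E\<^sub>j\<close>:
\<open>R\<^sup>*(X,Y)Z = c\<^sub>i\<^sub>j (\<langle>Y,Z\<rangle> X - \<langle>X,Z\<rangle> Y)\<close>. Hence \<open>c\<^sub>i\<^sub>j\<close> is the sectional curvature of
planes spanned by \<open>X \<in> E\<^sub>i\<close> and \<open>Y \<in> E\<^sub>j\<close>, and, the normal bundle being flat, the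
semi-parallelity defect \<open>\<beta>(R\<^sup>*(X,Y)Z,W) + \<beta>(R\<^sup>*(X,Y)W,Z)\<close> equals
\<open>c\<^sub>i\<^sub>j (\<langle>X,W\<rangle>\<langle>Y,Z\<rangle> + \<langle>X,Z\<rangle>\<langle>Y,W\<rangle>) (\<eta>\<^sub>i - \<eta>\<^sub>j)\<close> there. As the \<open>\<eta>\<^sub>i\<close> are distinct,
the defect vanishes on all pairs of eigenspaces iff \<open>c\<^sub>i\<^sub>j = 0\<close> for \<open>i \<noteq> j\<close>, and
by bilinearity in \<open>(X,Y)\<close> it then vanishes everywhere.\<close>

lemma semi_parallel_at_flat_iff:
  assumes flat: "\<forall>X Y \<xi>. Rperp X Y \<xi> = 0" and sym: "\<forall>X Y. \<beta> X Y = \<beta> Y X"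
  shows "semi_parallel_at R Rperp \<beta> \<longleftrightarrow>
    (\<forall>X Y Z W. \<beta> (R X Y Z) W + \<beta> (R X Y W) Z = 0)"
proof -
  have "Rperp X Y (\<beta> Z W) - \<beta> (R X Y Z) W - \<beta> Z (R X Y W)
      = - (\<beta> (R X Y Z) W + \<beta> (R X Y W) Z)" for X Y Z W
    using flat sym by simp
  then show ?thesis
    unfolding semi_parallel_at_def by (metis neg_equal_0_iff_equal)
qed

locale moebius_principal_frame =
  fixes \<beta> :: "'v::euclidean_space \<Rightarrow> 'v \<Rightarrow> 'w::euclidean_space"
    and \<psi> :: "'v \<Rightarrow> 'v \<Rightarrow> real"
    and R :: "'v \<Rightarrow> 'v \<Rightarrow> 'v \<Rightarrow> 'v"
    and I :: "'i set"
    and E :: "'i \<Rightarrow> 'v set"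
    and \<eta> :: "'i \<Rightarrow> 'w"
    and \<theta> :: "'i \<Rightarrow> real"
  assumes beta_bilinear: "bilinear \<beta>"
    and psi_bilinear: "bilinear \<psi>"
    and gauss: "inner (R X Y Z) W =
          inner (\<beta> X W) (\<beta> Y Z) - inner (\<beta> X Z) (\<beta> Y W)
          + \<psi> X W * inner Y Z + \<psi> Y Z * inner X W
          - \<psi> X Z * inner Y W - \<psi> Y W * inner X Z"
    and E_subspace: "i \<in> I \<Longrightarrow> subspace (E i)"
    and E_nontrivial: "i \<in> I \<Longrightarrow> E i \<noteq> {0}"
    and E_orthogonal: "\<lbrakk>i \<in> I; j \<in> I; i \<noteq> j; X \<in> E i; Y \<in> E j\<rbrakk> \<Longrightarrow> inner X Y = 0"
    and E_span: "span (\<Union>i\<in>I. E i) = UNIV"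
    and beta_E: "\<lbrakk>i \<in> I; X \<in> E i\<rbrakk> \<Longrightarrow> \<beta> X Y = inner X Y *\<^sub>R \<eta> i"
    and psi_E_off: "\<lbrakk>i \<in> I; j \<in> I; i \<noteq> j; X \<in> E i; Y \<in> E j\<rbrakk> \<Longrightarrow> \<psi> X Y = 0"
    and psi_E_diag: "\<lbrakk>i \<in> I; X \<in> E i; Y \<in> E i\<rbrakk> \<Longrightarrow> \<psi> X Y = \<theta> i * inner X Y"
begin

definition curv :: "'i \<Rightarrow> 'i \<Rightarrow> real" where
  "curv i j = inner (\<eta> i) (\<eta> j) + \<theta> i + \<theta> j"

lemma E_nonzero_elem:
  assumes "i \<in> I" obtains X where "X \<in> E i" "X \<noteq> 0"
  using E_nontrivial[OF assms] subspace_0[OF E_subspace[OF assms]] by blast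

lemma psi_E:
  assumes i: "i \<in> I" and X: "X \<in> E i"
  shows "\<psi> X W = \<theta> i * inner X W"
proof (rule linear_eq_on_span[where B = "\<Union>i\<in>I. E i"])
  show "linear (\<psi> X)" "linear (\<lambda>W. \<theta> i * inner X W)"
    using psi_bilinear by (auto simp: bilinear_def linear_iff algebra_simps inner_add_right)
  show "\<psi> X Y = \<theta> i * inner X Y" if "Y \<in> (\<Union>i\<in>I. E i)" for Y
    using that i X psi_E_diag psi_E_off E_orthogonal by (cases "Y \<in> E i") fastforce+
qed (simp add: E_span)

lemma R_E:
  assumes "i \<in> I" "j \<in> I" "X \<in> E i" "Y \<in> E j"
  shows "R X Y Z = curv i j *\<^sub>R (inner Y Z *\<^sub>R X - inner X Z *\<^sub>R Y)"
  using assms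
  by (simp add: vector_eq_rdot[symmetric] gauss beta_E psi_E curv_def inner_diff_left
      algebra_simps)

lemma R_bilinear: "bilinear (\<lambda>X Y. R X Y Z)"
  by (auto simp: bilinear_def linear_iff vector_eq_rdot[symmetric] gauss inner_add_left
      bilinear_ladd[OF beta_bilinear] bilinear_ladd[OF psi_bilinear]
      bilinear_lmul[OF beta_bilinear] bilinear_lmul[OF psi_bilinear] algebra_simps)

lemma sectional_curvature_E:
  assumes "i \<in> I" "j \<in> I" "i \<noteq> j" "X \<in> E i" "Y \<in> E j"
  shows "inner (R X Y Y) X = inner X X * inner Y Y * curv i j"
proof -
  have "inner X Y = 0" using assms E_orthogonal by blast
  then show ?thesis using assms by (simp add: R_E inner_commute algebra_simps)
qed

lemma semi_parallel_defect_E: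
  assumes "i \<in> I" "j \<in> I" "X \<in> E i" "Y \<in> E j"
  shows "\<beta> (R X Y Z) W + \<beta> (R X Y W) Z
    = (curv i j * (inner X W * inner Y Z + inner X Z * inner Y W)) *\<^sub>R (\<eta> i - \<eta> j)"
  using assms
  by (simp add: R_E bilinear_lmul[OF beta_bilinear] bilinear_lsub[OF beta_bilinear]
      beta_E inner_commute algebra_simps)

lemma curv_eq_0_iff_sectional_curvature_eq_0:
  "(\<forall>i\<in>I. \<forall>j\<in>I. i \<noteq> j \<longrightarrow> curv i j = 0) \<longleftrightarrow>
   (\<forall>i\<in>I. \<forall>j\<in>I. i \<noteq> j \<longrightarrow> (\<forall>X\<in>E i. \<forall>Y\<in>E j. inner (R X Y Y) X = 0))"
proof (intro iffI ballI impI)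
  fix i j X Y
  assume "\<forall>i\<in>I. \<forall>j\<in>I. i \<noteq> j \<longrightarrow> curv i j = 0" "i \<in> I" "j \<in> I" "i \<noteq> j" "X \<in> E i" "Y \<in> E j"
  then show "inner (R X Y Y) X = 0" by (simp add: sectional_curvature_E)
next
  fix i j
  assume sec: "\<forall>i\<in>I. \<forall>j\<in>I. i \<noteq> j \<longrightarrow> (\<forall>X\<in>E i. \<forall>Y\<in>E j. inner (R X Y Y) X = 0)"
    and ij: "i \<in> I" "j \<in> I" "i \<noteq> j"
  obtain X Y where X: "X \<in> E i" "X \<noteq> 0" and Y: "Y \<in> E j" "Y \<noteq> 0"
    using E_nonzero_elem ij by metis
  have "inner X X * inner Y Y * curv i j = 0"
    using sec ij X Y by (simp add: sectional_curvature_E[symmetric])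
  with X Y show "curv i j = 0" by simp
qed

lemma semi_parallel_defect_bilinear:
  "bilinear (\<lambda>X Y. \<beta> (R X Y Z) W + \<beta> (R X Y W) Z)"
  using R_bilinear[of Z] R_bilinear[of W]
  by (auto simp: bilinear_def linear_iff bilinear_ladd[OF beta_bilinear]
      bilinear_lmul[OF beta_bilinear] scaleR_add_right)

lemma semi_parallel_defect_eq_0_iff_curv_eq_0:
  assumes \<eta>_distinct: "\<forall>i\<in>I. \<forall>j\<in>I. i \<noteq> j \<longrightarrow> \<eta> i \<noteq> \<eta> j"
  shows "(\<forall>X Y Z W. \<beta> (R X Y Z) W + \<beta> (R X Y W) Z = 0) \<longleftrightarrow>
    (\<forall>i\<in>I. \<forall>j\<in>I. i \<noteq> j \<longrightarrow> curv i j = 0)"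
proof (intro iffI ballI impI allI)
  fix i j
  assume defect: "\<forall>X Y Z W. \<beta> (R X Y Z) W + \<beta> (R X Y W) Z = 0"
    and ij: "i \<in> I" "j \<in> I" "i \<noteq> j"
  obtain X Y where X: "X \<in> E i" "X \<noteq> 0" and Y: "Y \<in> E j" "Y \<noteq> 0"
    using E_nonzero_elem ij by metis
  have "inner X Y = 0" using E_orthogonal ij X Y by blast
  then have "(curv i j * (inner X X * inner Y Y)) *\<^sub>R (\<eta> i - \<eta> j) = 0"
    using defect semi_parallel_defect_E[OF ij(1,2) X(1) Y(1), of X Y]
    by (simp add: inner_commute)
  then show "curv i j = 0" using X Y ij \<eta>_distinct by simp
next
  fix X Y Z W
  assume curv: "\<forall>i\<in>I. \<forall>j\<in>I. i \<noteq> j \<longrightarrow> curv i j = 0"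
  show "\<beta> (R X Y Z) W + \<beta> (R X Y W) Z = 0"
  proof (rule bilinear_eq[OF semi_parallel_defect_bilinear, where g = "\<lambda>_ _. 0"])
    show "bilinear (\<lambda>_ _. 0 :: 'w)" by (simp add: bilinear_def linear_zero)
    show "\<beta> (R X' Y' Z) W + \<beta> (R X' Y' W) Z = 0"
      if XY': "X' \<in> (\<Union>i\<in>I. E i)" "Y' \<in> (\<Union>i\<in>I. E i)" for X' Y'
    proof -
      obtain a b where "a \<in> I" "b \<in> I" "X' \<in> E a" "Y' \<in> E b" using XY' by blast
      then show ?thesis using curv by (cases "a = b") (simp_all add: semi_parallel_defect_E)
    qed
  qed (auto simp: E_span)
qed

end

theorem lemma2p1:
  fixes M :: "'p set" and k :: nat
    and beta :: "'p \<Rightarrow> 'v::euclidean_space \<Rightarrow> 'v \<Rightarrow> 'w::euclidean_space"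
    and psi :: "'p \<Rightarrow> 'v \<Rightarrow> 'v \<Rightarrow> real"
    and R :: "'p \<Rightarrow> 'v \<Rightarrow> 'v \<Rightarrow> 'v \<Rightarrow> 'v"
    and Rperp :: "'p \<Rightarrow> 'v \<Rightarrow> 'v \<Rightarrow> 'w \<Rightarrow> 'w"
    and E :: "'p \<Rightarrow> nat \<Rightarrow> 'v set"
    and etabar :: "'p \<Rightarrow> nat \<Rightarrow> 'w"
    and theta :: "'p \<Rightarrow> nat \<Rightarrow> real"
  assumes dim: "DIM('v) \<ge> 3"
    and flat: "\<forall>p\<in>M. \<forall>X Y \<xi>. Rperp p X Y \<xi> = 0"
    and beta_bil: "\<forall>p\<in>M. bilinear (beta p)"
    and beta_sym: "\<forall>p\<in>M. \<forall>X Y. beta p X Y = beta p Y X"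
    and psi_bil: "\<forall>p\<in>M. bilinear (psi p)"
    and psi_sym: "\<forall>p\<in>M. \<forall>X Y. psi p X Y = psi p Y X"
    and gauss: "\<forall>p\<in>M. \<forall>X Y Z W.
        inner (R p X Y Z) W =
          inner (beta p X W) (beta p Y Z) - inner (beta p X Z) (beta p Y W)
          + psi p X W * inner Y Z + psi p Y Z * inner X W
          - psi p X Z * inner Y W - psi p Y W * inner X Z"
    and E_sub: "\<forall>p\<in>M. \<forall>i\<in>{1..k}. subspace (E p i) \<and> E p i \<noteq> {0}"
    and E_orth: "\<forall>p\<in>M. \<forall>i\<in>{1..k}. \<forall>j\<in>{1..k}. i \<noteq> j \<longrightarrow>
        (\<forall>X\<in>E p i. \<forall>Y\<in>E p j. inner X Y = 0)"
    and E_span: "\<forall>p\<in>M. span (\<Union>i\<in>{1..k}. E p i) = UNIV"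
    and eta_distinct: "\<forall>p\<in>M. \<forall>i\<in>{1..k}. \<forall>j\<in>{1..k}. i \<noteq> j \<longrightarrow> etabar p i \<noteq> etabar p j"
    and beta_E: "\<forall>p\<in>M. \<forall>i\<in>{1..k}. \<forall>X\<in>E p i. \<forall>Y. beta p X Y = inner X Y *\<^sub>R etabar p i"
    and psi_off: "\<forall>p\<in>M. \<forall>i\<in>{1..k}. \<forall>j\<in>{1..k}. i \<noteq> j \<longrightarrow>
        (\<forall>X\<in>E p i. \<forall>Y\<in>E p j. psi p X Y = 0)"
    and psi_diag: "\<forall>p\<in>M. \<forall>i\<in>{1..k}. \<forall>X\<in>E p i. \<forall>Y\<in>E p i.
        psi p X Y = theta p i * inner X Y"
  shows "((\<forall>p\<in>M. semi_parallel_at (R p) (Rperp p) (beta p)) \<longleftrightarrow>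
           (\<forall>p\<in>M. \<forall>i\<in>{1..k}. \<forall>j\<in>{1..k}. i \<noteq> j \<longrightarrow>
              inner (etabar p i) (etabar p j) + theta p i + theta p j = 0))
       \<and> ((\<forall>p\<in>M. semi_parallel_at (R p) (Rperp p) (beta p)) \<longleftrightarrow>
           (\<forall>p\<in>M. \<forall>i\<in>{1..k}. \<forall>j\<in>{1..k}. i \<noteq> j \<longrightarrow>
              (\<forall>X\<in>E p i. \<forall>Y\<in>E p j. inner (R p X Y Y) X = 0)))"
proof -
  have "(semi_parallel_at (R p) (Rperp p) (beta p) \<longleftrightarrow>
          (\<forall>i\<in>{1..k}. \<forall>j\<in>{1..k}. i \<noteq> j \<longrightarrow>
             inner (etabar p i) (etabar p j) + theta p i + theta p j = 0))
      \<and> (semi_parallel_at (R p) (Rperp p) (beta p) \<longleftrightarrow>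
          (\<forall>i\<in>{1..k}. \<forall>j\<in>{1..k}. i \<noteq> j \<longrightarrow>
             (\<forall>X\<in>E p i. \<forall>Y\<in>E p j. inner (R p X Y Y) X = 0)))"
    if p: "p \<in> M" for p
  proof -
    interpret moebius_principal_frame "beta p" "psi p" "R p" "{1..k}" "E p" "etabar p" "theta p"
      using p assms by unfold_locales auto
    have "semi_parallel_at (R p) (Rperp p) (beta p) \<longleftrightarrow>
        (\<forall>i\<in>{1..k}. \<forall>j\<in>{1..k}. i \<noteq> j \<longrightarrow> curv i j = 0)"
      using semi_parallel_at_flat_iff[of "Rperp p" "beta p" "R p"]
        semi_parallel_defect_eq_0_iff_curv_eq_0 p flat beta_sym eta_distinct
      by blast
    then show ?thesis
      using curv_eq_0_iff_sectional_curvature_eq_0 unfolding curv_def by blast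
  qed
  then show ?thesis by blast
qed

end
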